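(* Let $p\geq3$ be a prime and let $1\leq r_1\leq\cdots\leq r_\beta\leq p-1$ be integers with $p\mid\sum_{j=1}^\beta r_j$. Put $H(k)=\sum_{j=1}^{\beta}\left\{\frac{kr_j}{p}\right\}$, where $\{x\}=x-[x]$ denotes the fractional part. Let $1\leq\theta\leq p-1$ be an integer such that $H(k)=1$ for all $1\leq k\leq\theta$. Then $\beta\leq p$ and $\theta\leq\left[\frac{p}{\beta-1}\right]$.
   Context: $[x]$ denotes the integral part of a rational number $x$. *)

theory Defs
  imports Complex_Main "HOL-Computational_Algebra.Primes"
begin

definition Hsum :: "nat \<Rightarrow> nat \<Rightarrow> (nat \<Rightarrow> nat) \<Rightarrow> nat \<Rightarrow> real" where
  "Hsum p \<beta> r k = (\<Sum>j=1..\<beta>. frac (real k * real (r j) / real p))"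

end

theory Submission
  imports Defs
begin

text \<open>
  Write \<open>a\<^sub>j(k) = k r\<^sub>j mod p\<close>, so that \<open>H(k) = 1\<close> says \<open>\<Sum>\<^sub>j a\<^sub>j(k) = p\<close>.
  For \<open>k = 1\<close> this gives \<open>\<Sum>\<^sub>j r\<^sub>j = p\<close>, hence \<open>\<beta> \<le> p\<close>.
  Adding \<open>a\<^sub>j(l) + a\<^sub>j(m) = a\<^sub>j(l + m) + p \<cdot> [carry]\<close> over \<open>j\<close> shows that for
  \<open>l + m \<le> \<theta>\<close> exactly one index \<open>j\<close> carries, i.e. has \<open>a\<^sub>j(l + m) < a\<^sub>j(l)\<close>.
  Since \<open>a\<^sub>j\<close> is injective and nonzero on \<open>1..p-1\<close>, at most \<open>a\<^sub>j(\<theta>) - 1\<close> of the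
  \<open>l < \<theta>\<close> have \<open>a\<^sub>j(l) < a\<^sub>j(\<theta>)\<close>; all other \<open>l < \<theta>\<close> are carries of \<open>l + (\<theta> - l)\<close>
  at \<open>j\<close>. Summing over \<open>j\<close> and counting the carries over \<open>l\<close> instead gives
  \<open>\<beta>(\<theta> - 1) \<le> (\<theta> - 1) + p - \<beta>\<close>, that is \<open>\<theta>(\<beta> - 1) \<le> p - 1\<close>.
\<close>

lemma frac_of_nat_divide: "frac (real n / real p) = real (n mod p) / real p"
proof (cases "p = 0")
  case False
  have "real n / real p = real (n div p) + real (n mod p) / real p"
    using False by (simp add: field_simps flip: of_nat_mult of_nat_add)
  moreover have "\<lfloor>real n / real p\<rfloor> = int (n div p)"
    using floor_divide_of_nat_eq[of n p] by simp
  ultimately show ?thesis unfolding frac_def by simp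
qed simp

lemma Hsum_eq_sum_mod: "Hsum p \<beta> r k = real (\<Sum>j=1..\<beta>. k * r j mod p) / real p"
  unfolding Hsum_def of_nat_sum sum_divide_distrib
  by (simp add: frac_of_nat_divide flip: of_nat_mult)

lemma mult_mod_prime_pos:
  fixes p r l :: nat
  assumes "prime p" "\<not> p dvd r" "0 < l" "l < p"
  shows "0 < l * r mod p"
proof -
  have "\<not> p dvd l * r"
    using assms by (auto simp: prime_dvd_mult_iff dest: dvd_imp_le)
  then show ?thesis by (simp add: dvd_eq_mod_eq_0)
qed

lemma inj_on_mult_mod_prime:
  fixes p r :: nat
  assumes "prime p" "\<not> p dvd r"
  shows "inj_on (\<lambda>l. l * r mod p) {..<p}"
proof (rule linorder_inj_onI)
  fix l m assume "l < m" "l \<in> {..<p}" "m \<in> {..<p}"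
  have "\<not> p dvd (m - l) * r"
    using assms \<open>l < m\<close> \<open>m \<in> {..<p}\<close> by (auto simp: prime_dvd_mult_iff dest: dvd_imp_le)
  moreover have "l * r \<le> m * r"
    using \<open>l < m\<close> by simp
  ultimately show "l * r mod p \<noteq> m * r mod p"
    using mod_eq_dvd_iff_nat[of "l * r" "m * r" p] by (simp add: diff_mult_distrib)
qed auto

lemma add_eq_mod_add_carry:
  fixes x y p :: nat
  assumes "x < p" "y < p"
  shows "x + y = (x + y) mod p + p * of_bool (p \<le> x + y)"
proof (cases "p \<le> x + y")
  case True
  then have "(x + y) mod p = x + y - p"
    using assms by (simp add: le_mod_geq)
  then show ?thesis using True by simp
qed (simp add: not_le)

lemma mod_add_less_iff:
  fixes x y p :: nat
  assumes "x < p" "y < p"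
  shows "(x + y) mod p < x \<longleftrightarrow> p \<le> x + y"
  using assms by (cases "p \<le> x + y") (auto simp: le_mod_geq)

text \<open>Digit-wise addition base \<open>p\<close> of two digit vectors with digit sum \<open>p\<close> produces exactly one carry
  if the result again has digit sum \<open>p\<close>.\<close>

lemma card_carries_eq_1:
  fixes x y :: "'a \<Rightarrow> nat"
  assumes "finite C" "0 < p" "\<And>c. c \<in> C \<Longrightarrow> x c < p \<and> y c < p"
    and "sum x C = p" "sum y C = p" "(\<Sum>c\<in>C. (x c + y c) mod p) = p"
  shows "card {c\<in>C. p \<le> x c + y c} = 1"
proof -
  have "(\<Sum>c\<in>C. x c + y c) = (\<Sum>c\<in>C. (x c + y c) mod p + p * of_bool (p \<le> x c + y c))"
    using assms(3) add_eq_mod_add_carry by (intro sum.cong) auto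
  then have "(\<Sum>c\<in>C. x c + y c) = (\<Sum>c\<in>C. (x c + y c) mod p) + p * (\<Sum>c\<in>C. of_bool (p \<le> x c + y c))"
    by (simp only: sum.distrib sum_distrib_left)
  then have "p + p = p + p * card {c\<in>C. p \<le> x c + y c}"
    using assms by (simp add: sum.distrib Int_def)
  then show ?thesis
    using \<open>0 < p\<close> by simp
qed

lemma card_less_value_le:
  fixes f :: "'a \<Rightarrow> nat"
  assumes "inj_on f A" "\<And>a. a \<in> A \<Longrightarrow> 0 < f a"
  shows "card {a\<in>A. f a < v} \<le> v - 1"
proof -
  have "card {a\<in>A. f a < v} \<le> card {1..<v}"
    by (rule card_inj_on_le[where f = f]) (use assms in \<open>auto simp: Suc_le_eq intro: inj_on_subset\<close>)
  then show ?thesis by simp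
qed

lemma sum_card_swap:
  assumes "finite A" "finite B"
  shows "(\<Sum>a\<in>A. card {b\<in>B. P a b}) = (\<Sum>b\<in>B. card {a\<in>A. P a b})"
proof -
  have "(\<Sum>a\<in>A. card {b\<in>B. P a b}) = (\<Sum>a\<in>A. \<Sum>b\<in>B. of_bool (P a b))"
    using assms by (simp add: Int_def)
  also have "\<dots> = (\<Sum>b\<in>B. \<Sum>a\<in>A. of_bool (P a b))"
    by (rule sum.swap)
  finally show ?thesis
    using assms by (simp add: Int_def)
qed

lemma card_carries_mult_mod_eq_1:
  fixes r :: "'a \<Rightarrow> nat"
  assumes "finite C" "0 < p"
    and sums: "\<And>k. 1 \<le> k \<Longrightarrow> k \<le> \<theta> \<Longrightarrow> (\<Sum>c\<in>C. k * r c mod p) = p"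
    and "1 \<le> l" "l < \<theta>"
  shows "card {c\<in>C. \<theta> * r c mod p < l * r c mod p} = 1"
proof -
  define m where "m = \<theta> - l"
  have \<theta>: "\<theta> * r c mod p = (l * r c mod p + m * r c mod p) mod p" for c
    using \<open>l < \<theta>\<close> by (simp add: m_def mod_add_eq flip: add_mult_distrib)
  have "(\<Sum>c\<in>C. (l * r c mod p + m * r c mod p) mod p) = p"
    unfolding \<theta>[symmetric] using sums[of \<theta>] assms(4,5) by simp
  moreover have "(\<Sum>c\<in>C. m * r c mod p) = p"
    using sums[of m] assms(4,5) by (simp add: m_def)
  ultimately have "card {c\<in>C. p \<le> l * r c mod p + m * r c mod p} = 1"
    using assms sums[of l] by (intro card_carries_eq_1) simp_all
  moreover have "{c\<in>C. p \<le> l * r c mod p + m * r c mod p} = {c\<in>C. \<theta> * r c mod p < l * r c mod p}"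
    using \<open>0 < p\<close> by (simp add: \<theta> mod_add_less_iff)
  ultimately show ?thesis by simp
qed

lemma le_card_greater_add_mult_mod:
  fixes p r :: nat
  assumes "prime p" "\<not> p dvd r" "\<theta> < p"
  shows "\<theta> \<le> card {l\<in>{1..<\<theta>}. \<theta> * r mod p < l * r mod p} + \<theta> * r mod p"
proof -
  let ?a = "\<lambda>l. l * r mod p"
  have inj: "inj_on ?a {..<p}"
    using assms(1,2) by (rule inj_on_mult_mod_prime)
  have "{1..<\<theta>} \<subseteq> {l\<in>{1..<\<theta>}. ?a l < ?a \<theta>} \<union> {l\<in>{1..<\<theta>}. ?a \<theta> < ?a l}"
  proof
    fix l assume l: "l \<in> {1..<\<theta>}"
    then have "?a l \<noteq> ?a \<theta>"
      using inj_onD[OF inj, of l \<theta>] \<open>\<theta> < p\<close> by auto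
    then show "l \<in> {l\<in>{1..<\<theta>}. ?a l < ?a \<theta>} \<union> {l\<in>{1..<\<theta>}. ?a \<theta> < ?a l}"
      using l by auto
  qed
  then have "card {1..<\<theta>} \<le> card ({l\<in>{1..<\<theta>}. ?a l < ?a \<theta>} \<union> {l\<in>{1..<\<theta>}. ?a \<theta> < ?a l})"
    by (rule card_mono[rotated]) simp
  also have "\<dots> \<le> card {l\<in>{1..<\<theta>}. ?a l < ?a \<theta>} + card {l\<in>{1..<\<theta>}. ?a \<theta> < ?a l}"
    by (rule card_Un_le)
  finally have "\<theta> - 1 \<le> card {l\<in>{1..<\<theta>}. ?a l < ?a \<theta>} + card {l\<in>{1..<\<theta>}. ?a \<theta> < ?a l}"
    by simp
  moreover have "card {l\<in>{1..<\<theta>}. ?a l < ?a \<theta>} \<le> ?a \<theta> - 1"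
    using assms by (intro card_less_value_le inj_on_subset[OF inj] mult_mod_prime_pos) auto
  moreover have "\<theta> = 0 \<or> 0 < ?a \<theta>"
    using mult_mod_prime_pos[OF assms(1,2), of \<theta>] assms(3) by linarith
  ultimately show ?thesis by linarith
qed

lemma card_times_le_add_prime:
  fixes r :: "'a \<Rightarrow> nat"
  assumes "prime p" "finite C" "\<And>c. c \<in> C \<Longrightarrow> \<not> p dvd r c" "1 \<le> \<theta>" "\<theta> < p"
    and sums: "\<And>k. 1 \<le> k \<Longrightarrow> k \<le> \<theta> \<Longrightarrow> (\<Sum>c\<in>C. k * r c mod p) = p"
  shows "card C * \<theta> + 1 \<le> \<theta> + p"
proof -
  have "card C * \<theta> = (\<Sum>c\<in>C. \<theta>)"
    by simp
  also have "\<dots> \<le> (\<Sum>c\<in>C. card {l\<in>{1..<\<theta>}. \<theta> * r c mod p < l * r c mod p} + \<theta> * r c mod p)"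
    using assms by (intro sum_mono le_card_greater_add_mult_mod) auto
  also have "\<dots> = (\<Sum>l\<in>{1..<\<theta>}. card {c\<in>C. \<theta> * r c mod p < l * r c mod p}) + p"
    using assms sums[of \<theta>] by (simp add: sum.distrib sum_card_swap)
  also have "\<dots> = (\<theta> - 1) + p"
    using assms prime_gt_0_nat[OF assms(1)] by (simp add: card_carries_mult_mod_eq_1)
  finally show ?thesis
    using \<open>1 \<le> \<theta>\<close> by simp
qed

theorem lemma3p13:
  fixes p \<beta> \<theta> :: nat and r :: "nat \<Rightarrow> nat"
  assumes "prime p" and "p \<ge> 3"
    and "\<And>j. j \<in> {1..\<beta>} \<Longrightarrow> 1 \<le> r j \<and> r j \<le> p - 1"
    and "\<And>i j. i \<in> {1..\<beta>} \<Longrightarrow> j \<in> {1..\<beta>} \<Longrightarrow> i \<le> j \<Longrightarrow> r i \<le> r j"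
    and "p dvd (\<Sum>j=1..\<beta>. r j)"
    and "1 \<le> \<theta>" and "\<theta> \<le> p - 1"
    and "\<And>k. 1 \<le> k \<Longrightarrow> k \<le> \<theta> \<Longrightarrow> Hsum p \<beta> r k = 1"
  shows "\<beta> \<le> p \<and> int \<theta> \<le> \<lfloor>real p / (real \<beta> - 1)\<rfloor>"
proof -
  \<comment> \<open>Neither the ordering of the \<open>r j\<close> nor \<open>p dvd (\<Sum>j=1..\<beta>. r j)\<close> is needed.\<close>
  have "0 < p" using assms(2) by simp
  have sums: "(\<Sum>j=1..\<beta>. k * r j mod p) = p" if "1 \<le> k" "k \<le> \<theta>" for k
    using assms(8)[OF that] \<open>0 < p\<close> by (simp add: Hsum_eq_sum_mod field_simps flip: of_nat_sum)
  have r_bounds: "1 \<le> r j" "r j < p" if "j \<in> {1..\<beta>}" for j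
    using assms(3)[OF that] \<open>0 < p\<close> by auto
  have sum_r: "(\<Sum>j=1..\<beta>. r j) = p"
    using sums[of 1] assms(6) r_bounds by simp
  have "\<beta> \<le> p"
    using sum_mono[of "{1..\<beta>}" "\<lambda>_. 1" r] r_bounds sum_r by simp
  have "2 \<le> \<beta>"
  proof (rule ccontr)
    assume "\<not> 2 \<le> \<beta>"
    then have "\<beta> = 0 \<or> \<beta> = 1" by auto
    then show False
      using sum_r r_bounds[of 1] \<open>0 < p\<close> by auto
  qed
  have "\<beta> * \<theta> + 1 \<le> \<theta> + p"
    using card_times_le_add_prime[OF assms(1), of "{1..\<beta>}" r \<theta>] sums r_bounds assms(6,7)
    by (force dest: dvd_imp_le)
  then have "real \<theta> * (real \<beta> - 1) \<le> real p"
    by (simp add: algebra_simps flip: of_nat_mult of_nat_add of_nat_le_iff)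
  then have "real \<theta> \<le> real p / (real \<beta> - 1)"
    using \<open>2 \<le> \<beta>\<close> by (simp add: field_simps)
  then show ?thesis
    using \<open>\<beta> \<le> p\<close> by (simp add: le_floor_iff)
qed

end
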